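(* Let $(X,m)$ be a $\sigma$-finite measure space, $1\le p<\infty$, $\gamma\ne0$, and $\{T_t:t>0\}$ a one-parameter family of (not necessarily linear) operators on $L^p(X,m)$; let $f\in L^p(X,m)$ with $(x,t)\mapsto T_tf(x)$ measurable. Put $L=\infty$ if $\gamma>0$ and $L=0$ if $\gamma<0$, and for $\lambda>0$ $$J(\lambda)=\lambda^p\iint_{\{(x,t)\in X\times(0,\infty):\,t^{-\gamma/p}|T_tf(x)|>\lambda\}}t^{\gamma-1}\,dt\,dm(x).$$ (i) If $T^*f:=\sup_{t>0}|T_tf|\in L^p(X,m)$, then $\sup_{\lambda>0}J(\lambda)\le\frac1{|\gamma|}\|T^*f\|_{L^p(X,m)}^p$. If, in addition, $g(x)=\lim_{t\to0+}T_tf(x)$ exists and is finite for $m$-a.e. $x$, then $\lim_{\lambda\to L}J(\lambda)$ exists and equals $\frac1{|\gamma|}\|g\|_{L^p(X,m)}^p$. (ii) If $g(x)=\lim_{t\to0+}T_tf(x)$ exists and is finite for $m$-a.e. $x$, then $\frac1{|\gamma|}\|g\|_{L^p(X,m)}^p\le\liminf_{\lambda\to L}J(\lambda)$. *)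

theory Defs
  imports "HOL-Analysis.Analysis"
begin

definition Lp :: "'a measure \<Rightarrow> real \<Rightarrow> ('a \<Rightarrow> complex) set" where
  "Lp M p = {h. h \<in> borel_measurable M \<and> integrable M (\<lambda>x. norm (h x) powr p)}"

definition Jfun :: "'a measure \<Rightarrow> real \<Rightarrow> real \<Rightarrow> (real \<Rightarrow> 'a \<Rightarrow> complex) \<Rightarrow> real \<Rightarrow> ennreal" where
  "Jfun M p \<gamma> F lam = ennreal (lam powr p) *
     (\<integral>\<^sup>+ x. (\<integral>\<^sup>+ t \<in> {t. 0 < t \<and> t powr (- \<gamma> / p) * norm (F t x) > lam}.
          ennreal (t powr (\<gamma> - 1)) \<partial>lborel) \<partial>M)"

definition maxfun :: "(real \<Rightarrow> 'a \<Rightarrow> complex) \<Rightarrow> 'a \<Rightarrow> ennreal" where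
  "maxfun F x = (SUP t\<in>{0<..}. ennreal (norm (F t x)))"

end

theory Submission
  imports Defs
begin

text \<open>
  For fixed x let J_x(\<lambda>) be the inner integral of J(\<lambda>). Substituting t = s u with
  s = \<lambda>^(-p/\<gamma>) gives J_x(\<lambda>) = \<integral>_0^\<infinity> u^(\<gamma>-1) [u^(-\<gamma>/p) |T_(su) f(x)| > 1] du, and \<lambda> \<rightarrow> L
  exactly when s \<rightarrow> 0+. With a constant c in place of T_(su) f(x) this integral equals |c|^p/|\<gamma>|.
  As s \<rightarrow> 0+ the integrand converges for almost every u to the one with g(x) in place of
  T_(su) f(x), so Fatou's lemma, in u and then in x, gives (ii). If |T_t f| \<le> T^*f, then
  J_x(\<lambda>) \<le> (T^*f(x))^p/|\<gamma>|; this bounds sup J and provides the dominating functions for the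
  limit in (i).
\<close>

text \<open>Unlike \<open>nn_integral_dominated_convergence\<close>, the limit \<open>u'\<close> need not be measurable.\<close>

lemma nn_integral_dominated_convergence_AE:
  assumes [measurable]: "\<And>i. u i \<in> borel_measurable M" "w \<in> borel_measurable M"
    and bound: "\<And>j. AE x in M. u j x \<le> w x" and w: "(\<integral>\<^sup>+x. w x \<partial>M) < \<infinity>"
    and lim: "AE x in M. (\<lambda>i. u i x) \<longlonglongrightarrow> u' x"
  shows "(\<lambda>i. \<integral>\<^sup>+x. u i x \<partial>M) \<longlonglongrightarrow> (\<integral>\<^sup>+x. u' x \<partial>M)"
proof -
  have u': "AE x in M. liminf (\<lambda>i. u i x) = u' x"
    using lim by eventually_elim (rule lim_imp_Liminf, simp_all)
  have "(\<lambda>i. \<integral>\<^sup>+x. u i x \<partial>M) \<longlonglongrightarrow> (\<integral>\<^sup>+x. liminf (\<lambda>i. u i x) \<partial>M)"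
  proof (rule nn_integral_dominated_convergence[OF _ _ _ bound w])
    show "AE x in M. (\<lambda>i. u i x) \<longlonglongrightarrow> liminf (\<lambda>i. u i x)"
      using lim u' by eventually_elim simp
  qed measurable
  then show ?thesis
    by (simp add: nn_integral_cong_AE[OF u'])
qed

lemma le_Liminf_at_right_sequentially:
  fixes h :: "real \<Rightarrow> 'b::complete_linorder"
  assumes "\<And>S. (\<And>n. a < S n) \<Longrightarrow> S \<longlonglongrightarrow> a \<Longrightarrow> y \<le> liminf (\<lambda>n. h (S n))"
  shows "y \<le> Liminf (at_right a) h"
proof (subst le_Liminf_iff, intro allI impI)
  fix z assume "z < y"
  show "eventually (\<lambda>x. z < h x) (at_right a)"
  proof (rule sequentially_imp_eventually_at_right[of a "a + 1"])
    fix S assume "\<And>n. a < S n" "S \<longlonglongrightarrow> a"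
    with \<open>z < y\<close> show "eventually (\<lambda>n. z < h (S n)) sequentially"
      using assms less_le_trans less_LiminfD by blast
  qed simp
qed

lemma Liminf_le_Liminf_filterlim:
  fixes h :: "'b \<Rightarrow> 'c::complete_linorder"
  assumes "filterlim r G F"
  shows "Liminf G h \<le> Liminf F (\<lambda>x. h (r x))"
proof (subst le_Liminf_iff, intro allI impI)
  fix z assume "z < Liminf G h"
  from less_LiminfD[OF this] show "eventually (\<lambda>x. z < h (r x)) F"
    using assms unfolding filterlim_iff by blast
qed

definition Jfibre :: "real \<Rightarrow> real \<Rightarrow> (real \<Rightarrow> complex) \<Rightarrow> real \<Rightarrow> ennreal" where
  "Jfibre p \<gamma> \<phi> lam = ennreal (lam powr p) *
     (\<integral>\<^sup>+ t \<in> {t. 0 < t \<and> t powr (- \<gamma> / p) * norm (\<phi> t) > lam}. ennreal (t powr (\<gamma> - 1)) \<partial>lborel)"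

lemma level_set_powr_iff:
  fixes a lam p \<gamma> t :: real
  assumes "0 < a" "0 < lam" "0 < p" "0 < t"
  shows "lam < t powr (- \<gamma> / p) * a \<longleftrightarrow> \<gamma> * ln t < p * ln (a / lam)"
proof -
  have "lam < t powr (- \<gamma> / p) * a \<longleftrightarrow> ln lam < ln (t powr (- \<gamma> / p) * a)"
    using assms by simp
  also have "\<dots> \<longleftrightarrow> \<gamma> * ln t < p * ln (a / lam)"
    using assms by (auto simp: ln_mult ln_powr ln_div field_simps)
  finally show ?thesis .
qed

lemma nn_integral_powr_Ioo:
  fixes b \<gamma> :: real assumes "0 < b" "0 < \<gamma>"
  shows "(\<integral>\<^sup>+t\<in>{0<..<b}. ennreal (t powr (\<gamma> - 1)) \<partial>lborel) = ennreal (b powr \<gamma> / \<gamma>)"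
proof -
  have "(\<integral>\<^sup>+t\<in>{0<..<b}. ennreal (t powr (\<gamma> - 1)) \<partial>lborel)
      = (\<integral>\<^sup>+t. ennreal (t powr (\<gamma> - 1)) * indicator {0..b} t \<partial>lborel)"
    using AE_lborel_singleton[of 0] AE_lborel_singleton[of b]
    by (intro nn_integral_cong_AE) (auto simp: indicator_def)
  also have "\<dots> = ennreal (b powr (\<gamma> - 1 + 1) / (\<gamma> - 1 + 1))"
    using assms by (intro nn_integral_has_integral_lebesgue' has_integral_powr_from_0) auto
  finally show ?thesis by simp
qed

lemma nn_integral_powr_Ioi:
  fixes b \<gamma> :: real assumes "0 < b" "\<gamma> < 0"
  shows "(\<integral>\<^sup>+t\<in>{b<..}. ennreal (t powr (\<gamma> - 1)) \<partial>lborel) = ennreal (b powr \<gamma> / \<bar>\<gamma>\<bar>)"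
proof -
  have "(\<integral>\<^sup>+t\<in>{b<..}. ennreal (t powr (\<gamma> - 1)) \<partial>lborel)
      = (\<integral>\<^sup>+t. ennreal (t powr (\<gamma> - 1)) * indicator {b..} t \<partial>lborel)"
    using AE_lborel_singleton[of b] by (intro nn_integral_cong_AE) (auto simp: indicator_def)
  also have "\<dots> = ennreal (- (b powr (\<gamma> - 1 + 1)) / (\<gamma> - 1 + 1))"
    using assms by (intro nn_integral_has_integral_lebesgue' has_integral_powr_to_inf) auto
  finally show ?thesis using assms by simp
qed

lemma Jfibre_const:
  assumes "0 < lam" "0 < p" "\<gamma> \<noteq> 0"
  shows "Jfibre p \<gamma> (\<lambda>_. c) lam = ennreal (norm c powr p / \<bar>\<gamma>\<bar>)"
proof (cases "c = 0")
  case False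
  define a where "a = norm c"
  define b where "b = (a / lam) powr (p / \<gamma>)"
  have a: "0 < a" using False by (simp add: a_def)
  have b: "0 < b" using a assms by (simp add: b_def)
  have "\<gamma> * ln t < p * ln (a / lam) \<longleftrightarrow> (if 0 < \<gamma> then t < b else b < t)" if "0 < t" for t
  proof -
    have "ln b = p / \<gamma> * ln (a / lam)" using a assms by (simp add: b_def ln_powr)
    then have "\<gamma> * ln t < p * ln (a / lam) \<longleftrightarrow> \<gamma> * ln t < \<gamma> * ln b" using assms by simp
    then show ?thesis using that b assms by (auto simp: mult_less_cancel_left)
  qed
  then have level: "{t. 0 < t \<and> t powr (- \<gamma> / p) * a > lam} = (if 0 < \<gamma> then {0<..<b} else {b<..})"
    using level_set_powr_iff[OF a \<open>0 < lam\<close> \<open>0 < p\<close>] b by (auto intro: less_trans)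
  have "lam powr p * (b powr \<gamma> / \<bar>\<gamma>\<bar>) = a powr p / \<bar>\<gamma>\<bar>"
    using a assms by (simp add: b_def powr_powr powr_divide)
  moreover have "Jfibre p \<gamma> (\<lambda>_. c) lam = ennreal (lam powr p) * ennreal (b powr \<gamma> / \<bar>\<gamma>\<bar>)"
    unfolding Jfibre_def a_def[symmetric] level
    using b assms by (simp add: nn_integral_powr_Ioo nn_integral_powr_Ioi)
  ultimately show ?thesis by (simp add: a_def ennreal_mult[symmetric])
qed (use assms in \<open>simp add: Jfibre_def\<close>)

lemma level_indicator_mono:
  assumes "0 < t \<Longrightarrow> norm (\<phi> t) \<le> C"
  shows "indicator {t. 0 < t \<and> lam < t powr (- \<gamma> / p) * norm (\<phi> t)} t
       \<le> (indicator {t. 0 < t \<and> lam < t powr (- \<gamma> / p) * C} t :: ennreal)"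
proof -
  have "t powr (- \<gamma> / p) * norm (\<phi> t) \<le> t powr (- \<gamma> / p) * C" if "0 < t"
    using assms that by (intro mult_left_mono) auto
  then show ?thesis by (fastforce simp: indicator_def intro: less_le_trans)
qed

lemma Jfibre_le_const:
  assumes bound: "\<And>t. 0 < t \<Longrightarrow> norm (\<phi> t) \<le> C" and "0 < lam" "0 < p" "\<gamma> \<noteq> 0"
  shows "Jfibre p \<gamma> \<phi> lam \<le> ennreal (C powr p / \<bar>\<gamma>\<bar>)"
proof -
  have "0 \<le> C" using bound[of 1] norm_ge_zero[of "\<phi> 1"] by linarith
  have "Jfibre p \<gamma> \<phi> lam \<le> Jfibre p \<gamma> (\<lambda>_. complex_of_real C) lam"
    unfolding Jfibre_def using \<open>0 \<le> C\<close>
    by (intro mult_left_mono nn_integral_mono level_indicator_mono) (use bound in auto)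
  also have "\<dots> = ennreal (C powr p / \<bar>\<gamma>\<bar>)"
    using \<open>0 \<le> C\<close> assms by (simp add: Jfibre_const)
  finally show ?thesis .
qed

lemma level_density_dilate:
  fixes lam p \<gamma> s u :: real
  assumes "0 < lam" "0 < p" "\<gamma> \<noteq> 0" and s: "s = lam powr (- p / \<gamma>)"
  shows "ennreal (lam powr p * s) * (ennreal ((s * u) powr (\<gamma> - 1)) *
      indicator {t. 0 < t \<and> lam < t powr (- \<gamma> / p) * norm (\<phi> t)} (s * u))
    = ennreal (u powr (\<gamma> - 1)) * indicator {u. 0 < u \<and> 1 < u powr (- \<gamma> / p) * norm (\<phi> (s * u))} u"
proof (cases "0 < u")
  case True
  have "0 < s" using assms by simp
  have "s * s powr (\<gamma> - 1) = s powr \<gamma>"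
    using \<open>0 < s\<close> by (simp add: powr_diff)
  also have "\<dots> = lam powr (- p)"
    using assms by (simp add: powr_powr)
  finally have "lam powr p * s * s powr (\<gamma> - 1) = 1"
    using assms(1) by (simp add: powr_minus field_simps)
  then have "lam powr p * s * (s * u) powr (\<gamma> - 1) = u powr (\<gamma> - 1)"
    using \<open>0 < s\<close> True by (simp add: powr_mult)
  moreover have "s powr (- \<gamma> / p) = lam"
    using assms by (simp add: powr_powr)
  then have "(s * u) powr (- \<gamma> / p) = lam * u powr (- \<gamma> / p)"
    using \<open>0 < s\<close> True by (simp add: powr_mult)
  ultimately show ?thesis using True \<open>0 < s\<close> assms(1)
    by (simp add: indicator_def ennreal_mult[symmetric] mult.assoc)
qed (use assms in \<open>simp add: indicator_def zero_less_mult_iff\<close>)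

lemma Jfibre_dilate:
  assumes [measurable]: "\<phi> \<in> borel_measurable borel"
    and "0 < lam" "0 < p" "\<gamma> \<noteq> 0"
  shows "Jfibre p \<gamma> \<phi> lam = Jfibre p \<gamma> (\<lambda>t. \<phi> (lam powr (- p / \<gamma>) * t)) 1"
proof -
  define s where "s = lam powr (- p / \<gamma>)"
  have "0 < s" using assms by (simp add: s_def)
  let ?h = "\<lambda>t. ennreal (t powr (\<gamma> - 1)) * indicator {t. 0 < t \<and> lam < t powr (- \<gamma> / p) * norm (\<phi> t)} t"
  have "(\<integral>\<^sup>+t. ?h t \<partial>lborel) = ennreal s * (\<integral>\<^sup>+u. ?h (s * u) \<partial>lborel)"
    using nn_integral_real_affine[of ?h s 0] \<open>0 < s\<close> by simp
  then have "Jfibre p \<gamma> \<phi> lam = (\<integral>\<^sup>+u. ennreal (lam powr p * s) * ?h (s * u) \<partial>lborel)"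
    using \<open>0 < s\<close> by (simp add: Jfibre_def nn_integral_cmult ennreal_mult mult.assoc)
  also have "\<dots> = Jfibre p \<gamma> (\<lambda>t. \<phi> (s * t)) 1"
    unfolding level_density_dilate[OF assms(2-4) s_def] by (simp add: Jfibre_def)
  finally show ?thesis by (simp add: s_def)
qed

lemma AE_tendsto_dilated_level_density:
  fixes \<phi> :: "real \<Rightarrow> complex"
  assumes lim: "(\<phi> \<longlongrightarrow> g) (at_right 0)" and s: "filterlim s (at_right 0) sequentially"
    and "0 < p" "\<gamma> \<noteq> 0"
  shows "AE u in lborel.
    (\<lambda>n. ennreal (u powr (\<gamma> - 1)) * indicator {u. 0 < u \<and> 1 < u powr (- \<gamma> / p) * norm (\<phi> (s n * u))} u)
      \<longlonglongrightarrow> ennreal (u powr (\<gamma> - 1)) * indicator {u. 0 < u \<and> 1 < u powr (- \<gamma> / p) * norm g} u"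
  \<comment> \<open>Convergence can only fail where u^(-\<gamma>/p) |g| = 1, i.e. at u = |g|^(p/\<gamma>).\<close>
  using AE_lborel_singleton[of "norm g powr (p / \<gamma>)"]
proof eventually_elim
  fix u :: real assume u: "u \<noteq> norm g powr (p / \<gamma>)"
  show "(\<lambda>n. ennreal (u powr (\<gamma> - 1)) * indicator {u. 0 < u \<and> 1 < u powr (- \<gamma> / p) * norm (\<phi> (s n * u))} u)
      \<longlonglongrightarrow> ennreal (u powr (\<gamma> - 1)) * indicator {u. 0 < u \<and> 1 < u powr (- \<gamma> / p) * norm g} u"
  proof (cases "0 < u")
    case True
    have "filterlim (\<lambda>n. s n * u) (at_right 0) sequentially"
      using s True unfolding filterlim_at
      by (auto intro: tendsto_mult_left_zero elim: eventually_mono)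
    then have level_values: "(\<lambda>n. u powr (- \<gamma> / p) * norm (\<phi> (s n * u))) \<longlonglongrightarrow> u powr (- \<gamma> / p) * norm g"
      by (intro tendsto_intros filterlim_compose[OF lim])
    have "u powr (- \<gamma> / p) * norm g \<noteq> 1"
    proof
      assume "u powr (- \<gamma> / p) * norm g = 1"
      then have "norm g = u powr (\<gamma> / p)"
        using True by (simp add: powr_minus field_simps)
      then show False using u True assms by (simp add: powr_powr)
    qed
    then consider "1 < u powr (- \<gamma> / p) * norm g" | "u powr (- \<gamma> / p) * norm g < 1"
      by linarith
    then have "eventually (\<lambda>n. (1 < u powr (- \<gamma> / p) * norm (\<phi> (s n * u))) =
        (1 < u powr (- \<gamma> / p) * norm g)) sequentially"
    proof cases
      case 1
      show ?thesis using order_tendstoD(1)[OF level_values 1] 1 by (auto elim: eventually_mono)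
    next
      case 2
      show ?thesis using order_tendstoD(2)[OF level_values 2] 2 by (auto elim: eventually_mono)
    qed
    then show ?thesis
      by (intro tendsto_eventually) (auto elim!: eventually_mono simp: indicator_def)
  qed simp
qed

lemma liminf_Jfibre_dilate:
  assumes [measurable]: "\<phi> \<in> borel_measurable borel"
    and "(\<phi> \<longlongrightarrow> g) (at_right 0)" "filterlim s (at_right 0) sequentially" "0 < p" "\<gamma> \<noteq> 0"
  shows "ennreal (norm g powr p / \<bar>\<gamma>\<bar>) \<le> liminf (\<lambda>n. Jfibre p \<gamma> (\<lambda>t. \<phi> (s n * t)) 1)"
proof -
  let ?u = "\<lambda>n u. ennreal (u powr (\<gamma> - 1)) * indicator {u. 0 < u \<and> 1 < u powr (- \<gamma> / p) * norm (\<phi> (s n * u))} u"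
  have "ennreal (norm g powr p / \<bar>\<gamma>\<bar>) = Jfibre p \<gamma> (\<lambda>_. g) 1"
    using assms by (simp add: Jfibre_const)
  also have "\<dots> = (\<integral>\<^sup>+u. liminf (\<lambda>n. ?u n u) \<partial>lborel)"
    unfolding Jfibre_def using AE_tendsto_dilated_level_density[OF assms(2-)]
    by (simp, intro nn_integral_cong_AE) (auto elim!: eventually_mono simp: lim_imp_Liminf)
  also have "\<dots> \<le> liminf (\<lambda>n. \<integral>\<^sup>+u. ?u n u \<partial>lborel)"
    by (intro nn_integral_liminf) measurable
  also have "\<dots> = liminf (\<lambda>n. Jfibre p \<gamma> (\<lambda>t. \<phi> (s n * t)) 1)"
    by (simp add: Jfibre_def)
  finally show ?thesis .
qed

lemma tendsto_Jfibre_dilate: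
  assumes [measurable]: "\<phi> \<in> borel_measurable borel"
    and "(\<phi> \<longlongrightarrow> g) (at_right 0)" "filterlim s (at_right 0) sequentially" "0 < p" "\<gamma> \<noteq> 0"
    and bound: "\<And>t. 0 < t \<Longrightarrow> norm (\<phi> t) \<le> C" and pos: "\<And>n. 0 < s n"
  shows "(\<lambda>n. Jfibre p \<gamma> (\<lambda>t. \<phi> (s n * t)) 1) \<longlonglongrightarrow> ennreal (norm g powr p / \<bar>\<gamma>\<bar>)"
proof -
  have "0 \<le> C" using bound[of 1] norm_ge_zero[of "\<phi> 1"] by linarith
  let ?w = "\<lambda>u. ennreal (u powr (\<gamma> - 1)) * indicator {u. 0 < u \<and> 1 < u powr (- \<gamma> / p) * C} u"
  have "(\<integral>\<^sup>+u. ?w u \<partial>lborel) = Jfibre p \<gamma> (\<lambda>_. complex_of_real C) 1"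
    using \<open>0 \<le> C\<close> by (simp add: Jfibre_def)
  also have "\<dots> < \<infinity>"
    using assms by (simp add: Jfibre_const)
  finally have w: "(\<integral>\<^sup>+u. ?w u \<partial>lborel) < \<infinity>" .
  have "AE u in lborel. ennreal (u powr (\<gamma> - 1)) * indicator {u. 0 < u \<and> 1 < u powr (- \<gamma> / p) * norm (\<phi> (s n * u))} u
      \<le> ?w u" for n
    by (intro AE_I2 mult_left_mono level_indicator_mono) (use bound pos in auto)
  then have "(\<lambda>n. Jfibre p \<gamma> (\<lambda>t. \<phi> (s n * t)) 1) \<longlonglongrightarrow> Jfibre p \<gamma> (\<lambda>_. g) 1"
    unfolding Jfibre_def using AE_tendsto_dilated_level_density[OF assms(2-5)]
    by (simp, intro nn_integral_dominated_convergence[where w = ?w] w) auto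
  then show ?thesis
    using assms by (simp add: Jfibre_const)
qed

lemma measurable_dilate:
  fixes F :: "real \<Rightarrow> 'a \<Rightarrow> 'b::topological_space"
  assumes "(\<lambda>(x, t). F t x) \<in> borel_measurable (M \<Otimes>\<^sub>M lborel)"
  shows "(\<lambda>(x, t). F (s * t) x) \<in> borel_measurable (M \<Otimes>\<^sub>M lborel)"
proof -
  have "(\<lambda>(x, t). (x, s * t)) \<in> M \<Otimes>\<^sub>M lborel \<rightarrow>\<^sub>M M \<Otimes>\<^sub>M lborel"
    by measurable
  from measurable_comp[OF this assms] show ?thesis
    by (simp add: comp_def case_prod_beta')
qed

lemma borel_measurable_level_integral:
  assumes "(\<lambda>(x, t). F t x) \<in> borel_measurable (M \<Otimes>\<^sub>M lborel)"
  shows "(\<lambda>x. \<integral>\<^sup>+t\<in>{t. 0 < t \<and> t powr (- \<gamma> / p) * norm (F t x) > lam}. ennreal (t powr (\<gamma> - 1)) \<partial>lborel)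
    \<in> borel_measurable M"
proof -
  have [measurable]: "(\<lambda>z. F (snd z) (fst z)) \<in> borel_measurable (M \<Otimes>\<^sub>M lborel)"
    using assms by (simp add: case_prod_beta')
  show ?thesis
    by (rule lborel.borel_measurable_nn_integral) measurable
qed

lemma Jfun_eq_nn_integral_Jfibre:
  assumes "(\<lambda>(x, t). F t x) \<in> borel_measurable (M \<Otimes>\<^sub>M lborel)"
  shows "Jfun M p \<gamma> F lam = (\<integral>\<^sup>+x. Jfibre p \<gamma> (\<lambda>t. F t x) lam \<partial>M)"
  unfolding Jfun_def Jfibre_def
  by (rule nn_integral_cmult[symmetric, OF borel_measurable_level_integral[OF assms]])

lemma borel_measurable_Jfibre:
  assumes "(\<lambda>(x, t). F t x) \<in> borel_measurable (M \<Otimes>\<^sub>M lborel)"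
  shows "(\<lambda>x. Jfibre p \<gamma> (\<lambda>t. F t x) lam) \<in> borel_measurable M"
  using borel_measurable_level_integral[OF assms] unfolding Jfibre_def by measurable

lemma Jfun_dilate:
  assumes "(\<lambda>(x, t). F t x) \<in> borel_measurable (M \<Otimes>\<^sub>M lborel)"
    and "0 < lam" "0 < p" "\<gamma> \<noteq> 0"
  shows "Jfun M p \<gamma> F lam = Jfun M p \<gamma> (\<lambda>t. F (lam powr (- p / \<gamma>) * t)) 1"
proof -
  have "Jfibre p \<gamma> (\<lambda>t. F t x) lam = Jfibre p \<gamma> (\<lambda>t. F (lam powr (- p / \<gamma>) * t) x) 1"
    if "x \<in> space M" for x
    using measurable_Pair2[OF assms(1) that] assms(2-) by (intro Jfibre_dilate) simp_all
  then show ?thesis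
    using assms(1) measurable_dilate[OF assms(1)]
    by (simp add: Jfun_eq_nn_integral_Jfibre cong: nn_integral_cong)
qed

lemma filterlim_powr_scale:
  fixes p \<gamma> :: real
  assumes "0 < p" "\<gamma> \<noteq> 0"
  shows "filterlim (\<lambda>lam. lam powr (- p / \<gamma>)) (at_right 0) (if 0 < \<gamma> then at_top else at_right 0)"
proof (rule tendsto_imp_filterlim_at_right)
  show "eventually (\<lambda>lam. 0 < lam powr (- p / \<gamma>)) (if 0 < \<gamma> then at_top else at_right 0)"
    using eventually_gt_at_top[of 0] eventually_at_right_less[of 0]
    by (auto elim: eventually_mono)
  show "((\<lambda>lam. lam powr (- p / \<gamma>)) \<longlongrightarrow> 0) (if 0 < \<gamma> then at_top else at_right 0)"
  proof (cases "0 < \<gamma>")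
    case True
    then show ?thesis
      using assms by (auto intro!: tendsto_neg_powr filterlim_ident)
  next
    case False
    then have "0 < - p / \<gamma>" using assms by (simp add: divide_pos_neg)
    then show ?thesis using False
      by (auto intro!: tendsto_zero_powrI[where b = "- p / \<gamma>"] eventually_at_right_less
          simp: filterlim_at eventually_at_filter elim: eventually_mono)
  qed
qed

lemma eventually_Jfun_dilate:
  assumes "(\<lambda>(x, t). F t x) \<in> borel_measurable (M \<Otimes>\<^sub>M lborel)" "0 < p" "\<gamma> \<noteq> 0"
  shows "eventually (\<lambda>lam. Jfun M p \<gamma> (\<lambda>t. F (lam powr (- p / \<gamma>) * t)) 1 = Jfun M p \<gamma> F lam)
    (if 0 < \<gamma> then at_top else at_right 0)"
proof -
  have "eventually (\<lambda>lam. 0 < lam) (if 0 < \<gamma> then at_top else at_right (0::real))"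
    by (simp add: eventually_gt_at_top eventually_at_right_less)
  then show ?thesis
    by (rule eventually_mono) (simp add: Jfun_dilate assms)
qed

lemma norm_le_maxfun:
  assumes "maxfun F x < \<infinity>" "0 < t"
  shows "norm (F t x) \<le> enn2real (maxfun F x)"
proof -
  have "ennreal (norm (F t x)) \<le> maxfun F x"
    unfolding maxfun_def using assms(2) by (intro SUP_upper) auto
  then have "enn2real (ennreal (norm (F t x))) \<le> enn2real (maxfun F x)"
    using assms(1) by (intro enn2real_mono) auto
  then show ?thesis by simp
qed

lemma nn_integral_maxfun_powr:
  assumes "integrable M (\<lambda>x. enn2real (maxfun F x) powr p)"
  shows "(\<integral>\<^sup>+x. ennreal (enn2real (maxfun F x) powr p / \<bar>\<gamma>\<bar>) \<partial>M)
    = ennreal (1 / \<bar>\<gamma>\<bar> * (\<integral>x. enn2real (maxfun F x) powr p \<partial>M))"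
  using assms by (subst nn_integral_eq_integral) auto

lemma SUP_Jfun_le_maxfun:
  assumes meas: "(\<lambda>(x, t). F t x) \<in> borel_measurable (M \<Otimes>\<^sub>M lborel)"
    and fin: "AE x in M. maxfun F x < \<infinity>"
    and int: "integrable M (\<lambda>x. enn2real (maxfun F x) powr p)"
    and "0 < p" "\<gamma> \<noteq> 0"
  shows "(SUP lam\<in>{0<..}. Jfun M p \<gamma> F lam) \<le> ennreal (1 / \<bar>\<gamma>\<bar> * (\<integral>x. enn2real (maxfun F x) powr p \<partial>M))"
proof (rule SUP_least)
  fix lam :: real assume "lam \<in> {0<..}"
  have "AE x in M. Jfibre p \<gamma> (\<lambda>t. F t x) lam \<le> ennreal (enn2real (maxfun F x) powr p / \<bar>\<gamma>\<bar>)"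
    using fin
  proof eventually_elim
    fix x assume "maxfun F x < \<infinity>"
    from norm_le_maxfun[OF this] show "Jfibre p \<gamma> (\<lambda>t. F t x) lam \<le> ennreal (enn2real (maxfun F x) powr p / \<bar>\<gamma>\<bar>)"
      by (rule Jfibre_le_const) (use \<open>lam \<in> {0<..}\<close> assms in auto)
  qed
  then have "Jfun M p \<gamma> F lam \<le> (\<integral>\<^sup>+x. ennreal (enn2real (maxfun F x) powr p / \<bar>\<gamma>\<bar>) \<partial>M)"
    unfolding Jfun_eq_nn_integral_Jfibre[OF meas] by (rule nn_integral_mono_AE)
  then show "Jfun M p \<gamma> F lam \<le> ennreal (1 / \<bar>\<gamma>\<bar> * (\<integral>x. enn2real (maxfun F x) powr p \<partial>M))"
    using int by (simp add: nn_integral_maxfun_powr)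
qed

lemma nn_integral_divide_limit:
  fixes F :: "real \<Rightarrow> 'a \<Rightarrow> complex"
  assumes meas: "(\<lambda>(x, t). F t x) \<in> borel_measurable (M \<Otimes>\<^sub>M lborel)"
    and lim: "AE x in M. ((\<lambda>t. F t x) \<longlongrightarrow> g x) (at_right 0)"
    and "0 < p" "0 \<le> c"
  shows "(\<integral>\<^sup>+x. ennreal (norm (g x) powr p / c) \<partial>M) = ennreal (1 / c) * (\<integral>\<^sup>+x. ennreal (norm (g x) powr p) \<partial>M)"
proof -
  \<comment> \<open>\<open>g\<close> need not be measurable, but a.e. it is the liminf of the measurable \<open>F (1 / Suc n)\<close>.\<close>
  let ?u = "\<lambda>n x. ennreal (norm (F (1 / real (Suc n)) x) powr p)"
  have [measurable]: "?u n \<in> borel_measurable M" for n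
    using measurable_comp[OF measurable_Pair2'[of "1 / real (Suc n)" lborel M] meas] by (simp add: comp_def)
  have to_0: "filterlim (\<lambda>n. 1 / real (Suc n)) (at_right 0) sequentially"
    by (intro tendsto_imp_filterlim_at_right LIMSEQ_Suc[OF lim_1_over_n]) auto
  have "AE x in M. liminf (\<lambda>n. ?u n x) = ennreal (norm (g x) powr p)"
    using lim
  proof eventually_elim
    fix x assume "((\<lambda>t. F t x) \<longlongrightarrow> g x) (at_right 0)"
    from filterlim_compose[OF this to_0] have "(\<lambda>n. ?u n x) \<longlonglongrightarrow> ennreal (norm (g x) powr p)"
      using \<open>0 < p\<close> by (intro tendsto_ennrealI tendsto_powr' tendsto_norm) auto
    then show "liminf (\<lambda>n. ?u n x) = ennreal (norm (g x) powr p)"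
      by (simp add: lim_imp_Liminf del: tendsto_ennreal_iff)
  qed
  note limit = this
  have "(\<integral>\<^sup>+x. ennreal (norm (g x) powr p / c) \<partial>M) = (\<integral>\<^sup>+x. ennreal (1 / c) * liminf (\<lambda>n. ?u n x) \<partial>M)"
    using limit \<open>0 \<le> c\<close>
    by (intro nn_integral_cong_AE) (auto elim!: eventually_mono simp: ennreal_mult[symmetric])
  also have "\<dots> = ennreal (1 / c) * (\<integral>\<^sup>+x. liminf (\<lambda>n. ?u n x) \<partial>M)"
    by (rule nn_integral_cmult) measurable
  also have "\<dots> = ennreal (1 / c) * (\<integral>\<^sup>+x. ennreal (norm (g x) powr p) \<partial>M)"
    unfolding nn_integral_cong_AE[OF limit] ..
  finally show ?thesis .
qed

lemma liminf_Jfun_dilate: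
  assumes meas: "(\<lambda>(x, t). F t x) \<in> borel_measurable (M \<Otimes>\<^sub>M lborel)"
    and lim: "AE x in M. ((\<lambda>t. F t x) \<longlongrightarrow> g x) (at_right 0)"
    and "filterlim s (at_right 0) sequentially" "0 < p" "\<gamma> \<noteq> 0"
  shows "ennreal (1 / \<bar>\<gamma>\<bar>) * (\<integral>\<^sup>+x. ennreal (norm (g x) powr p) \<partial>M)
    \<le> liminf (\<lambda>n. Jfun M p \<gamma> (\<lambda>t. F (s n * t)) 1)"
proof -
  have "ennreal (1 / \<bar>\<gamma>\<bar>) * (\<integral>\<^sup>+x. ennreal (norm (g x) powr p) \<partial>M)
      = (\<integral>\<^sup>+x. ennreal (norm (g x) powr p / \<bar>\<gamma>\<bar>) \<partial>M)"
    using assms by (simp add: nn_integral_divide_limit)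
  also have "\<dots> \<le> (\<integral>\<^sup>+x. liminf (\<lambda>n. Jfibre p \<gamma> (\<lambda>t. F (s n * t) x) 1) \<partial>M)"
    using lim AE_space
  proof (intro nn_integral_mono_AE, eventually_elim)
    fix x assume "((\<lambda>t. F t x) \<longlongrightarrow> g x) (at_right 0)" "x \<in> space M"
    then show "ennreal (norm (g x) powr p / \<bar>\<gamma>\<bar>) \<le> liminf (\<lambda>n. Jfibre p \<gamma> (\<lambda>t. F (s n * t) x) 1)"
      using measurable_Pair2[OF meas] assms by (intro liminf_Jfibre_dilate) auto
  qed
  also have "\<dots> \<le> liminf (\<lambda>n. Jfun M p \<gamma> (\<lambda>t. F (s n * t)) 1)"
    unfolding Jfun_eq_nn_integral_Jfibre[OF measurable_dilate[OF meas]]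
    by (intro nn_integral_liminf borel_measurable_Jfibre measurable_dilate meas)
  finally show ?thesis .
qed

lemma tendsto_Jfun_dilate:
  assumes meas: "(\<lambda>(x, t). F t x) \<in> borel_measurable (M \<Otimes>\<^sub>M lborel)"
    and lim: "AE x in M. ((\<lambda>t. F t x) \<longlongrightarrow> g x) (at_right 0)"
    and fin: "AE x in M. maxfun F x < \<infinity>"
    and int: "integrable M (\<lambda>x. enn2real (maxfun F x) powr p)"
    and s: "filterlim s (at_right 0) sequentially" and pos: "\<And>n. 0 < s n"
    and "0 < p" "\<gamma> \<noteq> 0"
  shows "(\<lambda>n. Jfun M p \<gamma> (\<lambda>t. F (s n * t)) 1) \<longlonglongrightarrow> ennreal (1 / \<bar>\<gamma>\<bar>) * (\<integral>\<^sup>+x. ennreal (norm (g x) powr p) \<partial>M)"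
proof -
  have "(\<lambda>n. \<integral>\<^sup>+x. Jfibre p \<gamma> (\<lambda>t. F (s n * t) x) 1 \<partial>M)
      \<longlonglongrightarrow> (\<integral>\<^sup>+x. ennreal (norm (g x) powr p / \<bar>\<gamma>\<bar>) \<partial>M)"
  proof (rule nn_integral_dominated_convergence_AE)
    show "AE x in M. Jfibre p \<gamma> (\<lambda>t. F (s n * t) x) 1 \<le> ennreal (enn2real (maxfun F x) powr p / \<bar>\<gamma>\<bar>)" for n
      using fin
    proof eventually_elim
      fix x assume "maxfun F x < \<infinity>"
      with pos show "Jfibre p \<gamma> (\<lambda>t. F (s n * t) x) 1 \<le> ennreal (enn2real (maxfun F x) powr p / \<bar>\<gamma>\<bar>)"
        using assms by (intro Jfibre_le_const norm_le_maxfun) auto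
    qed
    show "AE x in M. (\<lambda>n. Jfibre p \<gamma> (\<lambda>t. F (s n * t) x) 1) \<longlonglongrightarrow> ennreal (norm (g x) powr p / \<bar>\<gamma>\<bar>)"
      using lim fin AE_space
    proof eventually_elim
      fix x assume "((\<lambda>t. F t x) \<longlongrightarrow> g x) (at_right 0)" "maxfun F x < \<infinity>" "x \<in> space M"
      then show "(\<lambda>n. Jfibre p \<gamma> (\<lambda>t. F (s n * t) x) 1) \<longlonglongrightarrow> ennreal (norm (g x) powr p / \<bar>\<gamma>\<bar>)"
        using measurable_Pair2[OF meas] norm_le_maxfun[of F x] assms
        by (intro tendsto_Jfibre_dilate[where C = "enn2real (maxfun F x)"]) auto
    qed
  qed (use int borel_measurable_Jfibre[OF measurable_dilate[OF meas]] in \<open>auto simp: nn_integral_maxfun_powr\<close>)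
  then show ?thesis
    using assms by (simp add: Jfun_eq_nn_integral_Jfibre[OF measurable_dilate[OF meas]] nn_integral_divide_limit)
qed

lemma tendsto_Jfun:
  assumes meas: "(\<lambda>(x, t). F t x) \<in> borel_measurable (M \<Otimes>\<^sub>M lborel)"
    and lim: "AE x in M. ((\<lambda>t. F t x) \<longlongrightarrow> g x) (at_right 0)"
    and fin: "AE x in M. maxfun F x < \<infinity>"
    and int: "integrable M (\<lambda>x. enn2real (maxfun F x) powr p)"
    and "0 < p" "\<gamma> \<noteq> 0"
  shows "(Jfun M p \<gamma> F \<longlongrightarrow> ennreal (1 / \<bar>\<gamma>\<bar>) * (\<integral>\<^sup>+x. ennreal (norm (g x) powr p) \<partial>M))
    (if 0 < \<gamma> then at_top else at_right 0)"
proof -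
  have "((\<lambda>s. Jfun M p \<gamma> (\<lambda>t. F (s * t)) 1) \<longlongrightarrow> ennreal (1 / \<bar>\<gamma>\<bar>) * (\<integral>\<^sup>+x. ennreal (norm (g x) powr p) \<partial>M))
      (at_right 0)"
  proof (rule tendsto_at_right_sequentially[of 0 1])
    fix S :: "nat \<Rightarrow> real" assume "\<And>n. 0 < S n" "S \<longlonglongrightarrow> 0"
    moreover from this have "filterlim S (at_right 0) sequentially"
      by (intro tendsto_imp_filterlim_at_right) auto
    ultimately show "(\<lambda>n. Jfun M p \<gamma> (\<lambda>t. F (S n * t)) 1) \<longlonglongrightarrow> ennreal (1 / \<bar>\<gamma>\<bar>) * (\<integral>\<^sup>+x. ennreal (norm (g x) powr p) \<partial>M)"
      using assms by (intro tendsto_Jfun_dilate) auto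
  qed simp
  from filterlim_compose[OF this filterlim_powr_scale[OF assms(5,6)]] show ?thesis
    by (rule Lim_transform_eventually) (rule eventually_Jfun_dilate[OF meas assms(5,6)])
qed

lemma Liminf_Jfun:
  assumes meas: "(\<lambda>(x, t). F t x) \<in> borel_measurable (M \<Otimes>\<^sub>M lborel)"
    and lim: "AE x in M. ((\<lambda>t. F t x) \<longlongrightarrow> g x) (at_right 0)"
    and "0 < p" "\<gamma> \<noteq> 0"
  shows "ennreal (1 / \<bar>\<gamma>\<bar>) * (\<integral>\<^sup>+x. ennreal (norm (g x) powr p) \<partial>M)
    \<le> Liminf (if 0 < \<gamma> then at_top else at_right 0) (Jfun M p \<gamma> F)"
proof -
  have "ennreal (1 / \<bar>\<gamma>\<bar>) * (\<integral>\<^sup>+x. ennreal (norm (g x) powr p) \<partial>M)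
      \<le> Liminf (at_right 0) (\<lambda>s. Jfun M p \<gamma> (\<lambda>t. F (s * t)) 1)"
  proof (rule le_Liminf_at_right_sequentially)
    fix S :: "nat \<Rightarrow> real" assume "\<And>n. 0 < S n" "S \<longlonglongrightarrow> 0"
    then have "filterlim S (at_right 0) sequentially"
      by (intro tendsto_imp_filterlim_at_right) auto
    then show "ennreal (1 / \<bar>\<gamma>\<bar>) * (\<integral>\<^sup>+x. ennreal (norm (g x) powr p) \<partial>M)
        \<le> liminf (\<lambda>n. Jfun M p \<gamma> (\<lambda>t. F (S n * t)) 1)"
      using assms by (intro liminf_Jfun_dilate) auto
  qed
  also have "\<dots> \<le> Liminf (if 0 < \<gamma> then at_top else at_right 0) (\<lambda>lam. Jfun M p \<gamma> (\<lambda>t. F (lam powr (- p / \<gamma>) * t)) 1)"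
    using filterlim_powr_scale[OF assms(3,4)] by (rule Liminf_le_Liminf_filterlim)
  also have "\<dots> = Liminf (if 0 < \<gamma> then at_top else at_right 0) (Jfun M p \<gamma> F)"
    using eventually_Jfun_dilate[OF assms(1,3,4)] by (rule Liminf_eq)
  finally show ?thesis .
qed

lemma Jfun_cong:
  assumes "\<And>t x. 0 < t \<Longrightarrow> F t x = G t x"
  shows "Jfun M p \<gamma> F = Jfun M p \<gamma> G"
proof -
  have "{t. 0 < t \<and> t powr (- \<gamma> / p) * norm (F t x) > lam} = {t. 0 < t \<and> t powr (- \<gamma> / p) * norm (G t x) > lam}"
    for x lam
    using assms by auto
  then show ?thesis
    by (simp add: Jfun_def fun_eq_iff)
qed

lemma maxfun_cong:
  assumes "\<And>t x. 0 < t \<Longrightarrow> F t x = G t x"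
  shows "maxfun F = maxfun G"
  using assms by (simp add: maxfun_def fun_eq_iff)

lemma measurable_extend_from_positive:
  fixes F :: "real \<Rightarrow> 'a \<Rightarrow> 'b::topological_space"
  assumes "(\<lambda>(x, t). F t x) \<in> borel_measurable (M \<Otimes>\<^sub>M restrict_space lborel {0<..})"
  shows "(\<lambda>(x, t). F (if 0 < t then t else 1) x) \<in> borel_measurable (M \<Otimes>\<^sub>M lborel)"
proof -
  have "(\<lambda>t::real. if 0 < t then t else 1) \<in> lborel \<rightarrow>\<^sub>M restrict_space lborel {0<..}"
    by (rule measurable_restrict_space2) auto
  then have "(\<lambda>(x, t::real). (x, if 0 < t then t else 1)) \<in> M \<Otimes>\<^sub>M lborel \<rightarrow>\<^sub>M M \<Otimes>\<^sub>M restrict_space lborel {0<..}"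
    by measurable
  from measurable_comp[OF this assms] show ?thesis
    by (simp add: comp_def case_prod_beta')
qed

theorem mainTheorem17:
  fixes M :: "'a measure" and p \<gamma> :: real
    and T :: "real \<Rightarrow> ('a \<Rightarrow> complex) \<Rightarrow> ('a \<Rightarrow> complex)"
    and f :: "'a \<Rightarrow> complex"
  assumes sf: "sigma_finite_measure M"
    and p: "1 \<le> p"
    and gam: "\<gamma> \<noteq> 0"
    and ops: "\<forall>t>0. \<forall>h\<in>Lp M p. T t h \<in> Lp M p"
    and f: "f \<in> Lp M p"
    and meas: "(\<lambda>(x, t). T t f x) \<in> borel_measurable (M \<Otimes>\<^sub>M restrict_space lborel {0<..})"
  defines "F \<equiv> (if \<gamma> > 0 then at_top else at_right (0::real))"
  shows "((maxfun (\<lambda>t. T t f) \<in> borel_measurable M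
            \<and> (AE x in M. maxfun (\<lambda>t. T t f) x < \<infinity>)
            \<and> integrable M (\<lambda>x. enn2real (maxfun (\<lambda>t. T t f) x) powr p))
          \<longrightarrow> (SUP lam\<in>{0<..}. Jfun M p \<gamma> (\<lambda>t. T t f) lam)
                \<le> ennreal (1 / \<bar>\<gamma>\<bar> * (\<integral>x. enn2real (maxfun (\<lambda>t. T t f) x) powr p \<partial>M))
            \<and> (\<forall>g. (AE x in M. ((\<lambda>t. T t f x) \<longlongrightarrow> g x) (at_right 0))
                 \<longrightarrow> (Jfun M p \<gamma> (\<lambda>t. T t f) \<longlongrightarrow>
                       ennreal (1 / \<bar>\<gamma>\<bar>) * (\<integral>\<^sup>+ x. ennreal (norm (g x) powr p) \<partial>M)) F))
       \<and> (\<forall>g. (AE x in M. ((\<lambda>t. T t f x) \<longlongrightarrow> g x) (at_right 0))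
            \<longrightarrow> ennreal (1 / \<bar>\<gamma>\<bar>) * (\<integral>\<^sup>+ x. ennreal (norm (g x) powr p) \<partial>M)
                  \<le> Liminf F (Jfun M p \<gamma> (\<lambda>t. T t f)))"
proof -
  \<comment> \<open>Extending \<open>T t f\<close> to \<open>t \<le> 0\<close> makes it measurable on \<open>M \<Otimes>\<^sub>M lborel\<close>.\<close>
  define \<Psi> where "\<Psi> t = T (if 0 < t then t else 1) f" for t
  have \<Psi>: "\<Psi> t x = T t f x" if "0 < t" for t x
    using that by (simp add: \<Psi>_def)
  have meas_\<Psi>: "(\<lambda>(x, t). \<Psi> t x) \<in> borel_measurable (M \<Otimes>\<^sub>M lborel)"
    unfolding \<Psi>_def by (rule measurable_extend_from_positive[OF meas])
  have lim_\<Psi>: "((\<lambda>t. T t f x) \<longlongrightarrow> l) (at_right 0) \<longleftrightarrow> ((\<lambda>t. \<Psi> t x) \<longlongrightarrow> l) (at_right 0)" for x l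
    using eventually_at_right_less[of 0] by (intro tendsto_cong) (auto simp: \<Psi> elim: eventually_mono)
  have J: "Jfun M p \<gamma> (\<lambda>t. T t f) = Jfun M p \<gamma> \<Psi>" and S: "maxfun (\<lambda>t. T t f) = maxfun \<Psi>"
    using \<Psi> by (auto intro: Jfun_cong maxfun_cong)
  have "0 < p" using p by simp
  show ?thesis
    unfolding F_def lim_\<Psi> J S
    using SUP_Jfun_le_maxfun[OF meas_\<Psi> _ _ \<open>0 < p\<close> gam] tendsto_Jfun[OF meas_\<Psi> _ _ _ \<open>0 < p\<close> gam]
      Liminf_Jfun[OF meas_\<Psi> _ \<open>0 < p\<close> gam]
    by blast
qed

end
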